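(* Consider $\mathrm U$ devices running slotted ALOHA whose batteries are always full (battery capacity $\mathrm E$), so that in each slot a device has a new update with probability $\alpha$ and then transmits it with $b_t\in[\mathrm E]$ energy units with probability $\pi_{\mathrm E,b_t}$, and such a transmission is decoded with probability $\omega_{b_t,\boldsymbol\ell_0}$, independently across slots. Let $\xi=\alpha\sum_{b_t=1}^{\mathrm E}\pi_{\mathrm E,b_t}\omega_{b_t,\boldsymbol\ell_0}\in(0,1]$ be the probability that a device successfully delivers a new update in a slot, and $\mathrm T=\mathrm U\xi$ the throughput. Then the discretized-AoI PMF, peak-AoI PMF, average AoI and age-violation probability of each device are $$\mathbb P[\widehat\Delta=\delta]=\mathbb P[\widetilde\Delta=\delta]=\xi(1-\xi)^{\delta-2},\quad\delta=2,3,\dots,$$ $$\bar\Delta=\frac12+\frac1\xi=\frac12+\frac{\mathrm U}{\mathrm T},\qquad \zeta(\theta)=(1-\xi)^{\theta-1}=\Big(1-\frac{\mathrm T}{\mathrm U}\Big)^{\theta-1},\quad\theta\ge1.$$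
   Context: Time is slotted (slot length $1$). $\boldsymbol\ell_0$ denotes the battery profile in which all other $\mathrm U-1$ devices have full battery, and $\omega_{b_t,\boldsymbol\ell_0}\in[0,1]$ is the given probability that an update transmitted with $b_t$ energy units is correctly decoded in this situation. The AoI of a device is reset to $1$ at the end of a slot in which it successfully delivers an update and grows linearly with slope $1$ otherwise. With successful-delivery slots $s_0<s_1<\dots$, the discretized AoI at the end of slot $s\in\{s_{i-1}+1,\dots,s_i\}$ is $s-s_{i-1}+1$ and the peak AoI of the $i$th period is $s_i-s_{i-1}+1$; $\mathbb P[\widehat\Delta=\delta]$ and $\mathbb P[\widetilde\Delta=\delta]$ are the stationary (long-run fraction) PMFs of these quantities over slots, resp. over periods; $\bar\Delta$ is the long-run time average of the AoI and $\zeta(\theta)$ the long-run fraction of time during which the AoI exceeds $\theta$. *)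

theory Defs
  imports "HOL-Probability.Probability"
begin

text \<open>Energy level chosen for a transmission when the battery is full (capacity E):
  level b in {1..E} with probability p b; level 0 encodes "no transmission"
  (the remaining probability mass, if the p b sum to less than one).\<close>
definition tx_pmf :: "nat \<Rightarrow> (nat \<Rightarrow> real) \<Rightarrow> nat pmf" where
  "tx_pmf E p = embed_pmf (\<lambda>b. if b = 0 then 1 - (\<Sum>c=1..E. p c)
                                  else if b \<le> E then p b else 0)"

text \<open>Outcome of one slot for one device: (new update arrived, energy level used
  (0 = no transmission), update decoded).\<close>
definition slot_pmf :: "nat \<Rightarrow> real \<Rightarrow> (nat \<Rightarrow> real) \<Rightarrow> (nat \<Rightarrow> real) \<Rightarrow> (bool \<times> nat \<times> bool) pmf" where
  "slot_pmf E alpha p omega =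
     bind_pmf (bernoulli_pmf alpha) (\<lambda>a.
     bind_pmf (if a then tx_pmf E p else return_pmf 0) (\<lambda>b.
     bind_pmf (if b = 0 then return_pmf False else bernoulli_pmf (omega b)) (\<lambda>d.
     return_pmf (a, b, d))))"

definition delivered :: "bool \<times> nat \<times> bool \<Rightarrow> bool" where
  "delivered z \<longleftrightarrow> fst z \<and> fst (snd z) \<noteq> 0 \<and> snd (snd z)"

definition succ_prob :: "nat \<Rightarrow> real \<Rightarrow> (nat \<Rightarrow> real) \<Rightarrow> (nat \<Rightarrow> real) \<Rightarrow> real" where
  "succ_prob E alpha p omega = alpha * (\<Sum>b=1..E. p b * omega b)"

text \<open>Sample path x: x s = successful delivery in slot s (slots 0,1,2,...).
  Convention: a virtual delivery in slot -1, i.e. AoI = 1 at time 0.\<close>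
definition last_succ :: "(nat \<Rightarrow> bool) \<Rightarrow> nat \<Rightarrow> int" where
  "last_succ x s = (if \<exists>k<s. x k then int (GREATEST k. k < s \<and> x k) else -1)"

text \<open>Discretized AoI at the end of slot s (before a possible reset).\<close>
definition disc_aoi :: "(nat \<Rightarrow> bool) \<Rightarrow> nat \<Rightarrow> int" where
  "disc_aoi x s = int s - last_succ x s + 1"

definition succ_slot :: "(nat \<Rightarrow> bool) \<Rightarrow> nat \<Rightarrow> nat" where
  "succ_slot x i = enumerate {s. x s} i"

text \<open>Peak AoI of the i-th period (i \<ge> 1): s_i - s_(i-1) + 1.\<close>
definition peak_aoi :: "(nat \<Rightarrow> bool) \<Rightarrow> nat \<Rightarrow> int" where
  "peak_aoi x i = int (succ_slot x i) - int (succ_slot x (i - 1)) + 1"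

text \<open>Continuous-time AoI; slot s occupies [s, s+1), a delivery in slot k resets the
  AoI to 1 at time k+1, slope 1 otherwise.\<close>
definition aoi :: "(nat \<Rightarrow> bool) \<Rightarrow> real \<Rightarrow> real" where
  "aoi x t = t - real_of_int (last_succ x (nat \<lfloor>t\<rfloor>))"

end

theory Submission
  imports Defs "HOL-Library.Discrete_Functions"
begin

(* The successful deliveries of one device form an i.i.d. Bernoulli(xi) sequence.  The discretized
   AoI at the end of slot s is at least k + 2 exactly when the k slots before s all fail; this event
   has probability (1 - xi)^k and is independent of the same event at slots more than k apart.  For
   events with such finite-range dependence the number of occurrences up to N has variance O(N), so
   Chebyshev's inequality along N = k^2, Borel-Cantelli and monotone interpolation give a strong law
   of large numbers.  This yields the AoI PMF and, since the continuous AoI exceeds theta inside a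
   slot exactly when the discretized AoI is at least theta + 1, the age-violation probability.  The
   peak AoI of a period is the discretized AoI at its closing delivery, so the peak-AoI frequencies
   are ratios of two such frequencies.  For the time average, write D s for the discretized AoI and
   X s for the delivery indicator: D (s + 1) = (1 - xi) D s + 1 + xi + e s, where the martingale
   differences e s = (X s - xi) (1 - D s) have bounded variance, so the average of D tends to
   1 + 1/xi almost surely; the continuous AoI, linear within each slot, averages half a slot less. *)

section \<open>The slot distribution\<close>

lemma pmf_tx_pmf:
  assumes "\<forall>b\<in>{1..E}. 0 \<le> p b" "(\<Sum>b=1..E. p b) \<le> 1"
  shows "pmf (tx_pmf E p) b = (if b = 0 then 1 - (\<Sum>c=1..E. p c) else if b \<le> E then p b else 0)"
  unfolding tx_pmf_def
proof (rule pmf_embed_pmf)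
  show "0 \<le> (if b = 0 then 1 - (\<Sum>c=1..E. p c) else if b \<le> E then p b else 0)" for b
    using assms by auto
  have "(\<integral>\<^sup>+b. ennreal (if b = 0 then 1 - (\<Sum>c=1..E. p c) else if b \<le> E then p b else 0) \<partial>count_space UNIV)
      = (\<Sum>b\<in>{0..E}. ennreal (if b = 0 then 1 - (\<Sum>c=1..E. p c) else if b \<le> E then p b else 0))"
    by (rule nn_integral_count_space') auto
  also have "\<dots> = 1"
    using assms
    by (simp add: sum.atLeast_Suc_atMost sum_ennreal[symmetric] ennreal_plus[symmetric]
        del: ennreal_plus)
  finally show "(\<integral>\<^sup>+b. ennreal (if b = 0 then 1 - (\<Sum>c=1..E. p c) else if b \<le> E then p b else 0)
      \<partial>count_space UNIV) = 1" .
qed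

lemma set_pmf_tx_pmf:
  assumes "\<forall>b\<in>{1..E}. 0 \<le> p b" "(\<Sum>b=1..E. p b) \<le> 1"
  shows "set_pmf (tx_pmf E p) \<subseteq> {0..E}"
  using pmf_tx_pmf[OF assms] by (auto simp: set_pmf_eq split: if_splits)

lemma measure_delivered_slot_pmf:
  assumes alpha: "0 \<le> alpha" "alpha \<le> 1"
    and p: "\<forall>b\<in>{1..E}. 0 \<le> p b" "(\<Sum>b=1..E. p b) \<le> 1"
    and omega: "\<forall>b\<in>{1..E}. 0 \<le> omega b \<and> omega b \<le> 1"
  shows "measure_pmf.prob (slot_pmf E alpha p omega) {z. delivered z} = succ_prob E alpha p omega"
proof -
  have "emeasure (slot_pmf E alpha p omega) {z. delivered z}
     = ennreal alpha * (\<integral>\<^sup>+b. (if b = 0 then 0 else ennreal (omega b)) \<partial>tx_pmf E p)"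
    using set_pmf_tx_pmf[OF p] omega unfolding slot_pmf_def
    by (simp add: delivered_def alpha mult.commute)
       (intro arg_cong[where f="(*) (ennreal alpha)"] nn_integral_cong_AE;
        fastforce simp: AE_measure_pmf_iff indicator_def)
  also have "(\<integral>\<^sup>+b. (if b = 0 then 0 else ennreal (omega b)) \<partial>tx_pmf E p)
      = (\<Sum>b\<in>{0..E}. (if b = 0 then 0 else ennreal (omega b)) * pmf (tx_pmf E p) b)"
    using set_pmf_tx_pmf[OF p] by (intro nn_integral_measure_pmf_support) auto
  also have "\<dots> = (\<Sum>b=1..E. ennreal (p b * omega b))"
    using p omega by (simp add: sum.atLeast_Suc_atMost pmf_tx_pmf ennreal_mult' mult.commute)
  also have "\<dots> = ennreal (\<Sum>b=1..E. p b * omega b)"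
    using p omega by (intro sum_ennreal) auto
  finally have "emeasure (slot_pmf E alpha p omega) {z. delivered z}
      = ennreal (succ_prob E alpha p omega)"
    using alpha by (simp add: succ_prob_def ennreal_mult')
  moreover have "0 \<le> succ_prob E alpha p omega"
    unfolding succ_prob_def using alpha p omega by (intro mult_nonneg_nonneg sum_nonneg) auto
  ultimately show ?thesis
    by (simp add: measure_pmf.emeasure_eq_measure)
qed

section \<open>A strong law of large numbers from second moments\<close>

lemma (in prob_space) AE_tendsto_squares_of_second_moment_bound:
  fixes W :: "nat \<Rightarrow> 'a \<Rightarrow> real"
  assumes [measurable]: "\<And>N. W N \<in> borel_measurable M"
    and integrable: "\<And>N. integrable M (\<lambda>w. (W N w)\<^sup>2)"
    and bound: "\<And>N. expectation (\<lambda>w. (W N w)\<^sup>2) \<le> C * (real N + 1)"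
  shows "AE w in M. (\<lambda>k. W (k\<^sup>2) w / real (k\<^sup>2)) \<longlonglongrightarrow> 0"
proof -
  have "0 \<le> expectation (\<lambda>w. (W 0 w)\<^sup>2)" by (simp add: integral_nonneg_AE)
  also have "\<dots> \<le> C" using bound[of 0] by simp
  finally have "0 \<le> C" .
  define A where "A m k = {w\<in>space M. real (k\<^sup>2) / real (Suc m) \<le> \<bar>W (k\<^sup>2) w\<bar>}" for m k
  have [measurable]: "A m k \<in> events" for m k
    unfolding A_def by measurable
  have prob_A: "prob (A m k) \<le> 2 * C * (real (Suc m))\<^sup>2 * inverse (real k ^ 2)" if "1 \<le> k" for m k
  proof -
    have "prob (A m k) \<le> expectation (\<lambda>w. (W (k\<^sup>2) w)\<^sup>2) / (real (k\<^sup>2) / real (Suc m))\<^sup>2"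
      unfolding A_def using that by (intro second_moment_method integrable) auto
    also have "\<dots> \<le> C * (2 * real (k\<^sup>2)) / (real (k\<^sup>2) / real (Suc m))\<^sup>2"
    proof (intro divide_right_mono order.trans[OF bound])
      show "C * (real (k\<^sup>2) + 1) \<le> C * (2 * real (k\<^sup>2))"
        using \<open>0 \<le> C\<close> that by (intro mult_left_mono) (auto simp: one_le_power)
    qed simp
    also have "\<dots> = 2 * C * (real (Suc m))\<^sup>2 * inverse (real k ^ 2)"
      using that by (simp add: field_simps power2_eq_square)
    finally show ?thesis .
  qed
  have "summable (\<lambda>k. inverse (real k ^ 2))"
    using inverse_power_summable[of 2, where 'a=real] by simp
  then have "summable (\<lambda>k. prob (A m k))" for m
    by (rule summable_comparison_test'[OF summable_mult, where N=1]) (use prob_A in simp)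
  then have "AE w in M. eventually (\<lambda>k. w \<in> space M - A m k) sequentially" for m
    by (intro borel_cantelli_AE1) (auto simp: emeasure_eq_measure)
  then have "AE w in M. \<forall>m. eventually (\<lambda>k. w \<notin> A m k) sequentially"
    by (auto simp: AE_all_countable)
  then show ?thesis
  proof (rule AE_mp[OF _ AE_I2], intro impI LIMSEQ_I)
    fix w r assume "w \<in> space M" and ev: "\<forall>m. eventually (\<lambda>k. w \<notin> A m k) sequentially"
      and "0 < (r::real)"
    then obtain m where m: "1 / real (Suc m) < r"
      by (metis reals_Archimedean inverse_eq_divide)
    from ev obtain k0 where k0: "\<And>k. k \<ge> k0 \<Longrightarrow> w \<notin> A m k"
      by (auto simp: eventually_sequentially)
    have "norm (W (k\<^sup>2) w / real (k\<^sup>2) - 0) < r" if "k \<ge> max 1 k0" for k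
    proof -
      have "\<bar>W (k\<^sup>2) w\<bar> < real (k\<^sup>2) / real (Suc m)"
        using k0[of k] that \<open>w \<in> space M\<close> by (auto simp: A_def)
      then have "\<bar>W (k\<^sup>2) w\<bar> / real (k\<^sup>2) < 1 / real (Suc m)"
        using that by (simp add: divide_less_eq)
      then show ?thesis using m by (simp add: abs_divide)
    qed
    then show "\<exists>k0. \<forall>k\<ge>k0. norm (W (k\<^sup>2) w / real (k\<^sup>2) - 0) < r" by blast
  qed
qed

lemma tendsto_div_of_tendsto_squares:
  fixes S :: "nat \<Rightarrow> real"
  assumes mono: "mono S" and nonneg: "\<And>n. 0 \<le> S n"
    and lim: "(\<lambda>k. S (k\<^sup>2) / real (k\<^sup>2)) \<longlonglongrightarrow> a"
  shows "(\<lambda>N. S N / real N) \<longlonglongrightarrow> a"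
proof -
  have "filterlim floor_sqrt sequentially sequentially"
    unfolding filterlim_at_top eventually_sequentially by (metis le_floor_sqrtI le_trans)
  moreover have "(\<lambda>k. S (k\<^sup>2) / real (k\<^sup>2) * (real k / real (Suc k))\<^sup>2) \<longlonglongrightarrow> a * 1\<^sup>2"
    and "(\<lambda>k. S ((Suc k)\<^sup>2) / real ((Suc k)\<^sup>2) * (real (Suc k) / real k)\<^sup>2) \<longlonglongrightarrow> a * 1\<^sup>2"
    by (intro tendsto_intros lim LIMSEQ_Suc[OF lim] LIMSEQ_n_over_Suc_n LIMSEQ_Suc_n_over_n)+
  ultimately have lower: "(\<lambda>N. S ((floor_sqrt N)\<^sup>2) / real ((floor_sqrt N)\<^sup>2)
          * (real (floor_sqrt N) / real (Suc (floor_sqrt N)))\<^sup>2) \<longlonglongrightarrow> a"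
    and upper: "(\<lambda>N. S ((Suc (floor_sqrt N))\<^sup>2) / real ((Suc (floor_sqrt N))\<^sup>2)
          * (real (Suc (floor_sqrt N)) / real (floor_sqrt N))\<^sup>2) \<longlonglongrightarrow> a"
    by (auto dest: filterlim_compose)
  show ?thesis
  proof (rule tendsto_sandwich[OF _ _ lower upper];
         unfold eventually_sequentially; intro exI[of _ 1] allI impI)
    fix N :: nat assume "1 \<le> N"
    define k where "k = floor_sqrt N"
    have "1 \<le> k" and below: "k\<^sup>2 \<le> N" and above: "N < (Suc k)\<^sup>2"
      using \<open>1 \<le> N\<close> Suc_floor_sqrt_power2_gt[of N] by (auto simp: k_def le_floor_sqrtI)
    have "S (k\<^sup>2) / real (k\<^sup>2) * (real k / real (Suc k))\<^sup>2 = S (k\<^sup>2) / real ((Suc k)\<^sup>2)"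
      using \<open>1 \<le> k\<close> by (simp add: power_divide)
    also have "\<dots> \<le> S N / real N"
    proof (intro frac_le monoD[OF mono])
      show "real N \<le> real ((Suc k)\<^sup>2)" using above by linarith
    qed (use below \<open>1 \<le> N\<close> nonneg in auto)
    finally show "S (k\<^sup>2) / real (k\<^sup>2) * (real k / real (Suc k))\<^sup>2 \<le> S N / real N" .
    have "S N / real N \<le> S ((Suc k)\<^sup>2) / real (k\<^sup>2)"
      using below above \<open>1 \<le> k\<close> nonneg
      by (intro frac_le monoD[OF mono]) auto
    also have "\<dots> = S ((Suc k)\<^sup>2) / real ((Suc k)\<^sup>2) * (real (Suc k) / real k)\<^sup>2"
      using \<open>1 \<le> k\<close> by (simp add: power_divide del: of_nat_Suc)
    finally show "S N / real N \<le> S ((Suc k)\<^sup>2) / real ((Suc k)\<^sup>2) * (real (Suc k) / real k)\<^sup>2" .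
  qed
qed

lemma (in prob_space) AE_tendsto_average_of_variance_bound:
  fixes Z :: "nat \<Rightarrow> 'a \<Rightarrow> real" and m :: "nat \<Rightarrow> real"
  assumes [measurable]: "\<And>s. Z s \<in> borel_measurable M"
    and nonneg: "\<And>s w. w \<in> space M \<Longrightarrow> 0 \<le> Z s w"
    and integrable: "\<And>N. integrable M (\<lambda>w. ((\<Sum>s<N. Z s w) - m N)\<^sup>2)"
    and bound: "\<And>N. expectation (\<lambda>w. ((\<Sum>s<N. Z s w) - m N)\<^sup>2) \<le> C * (real N + 1)"
    and mean: "(\<lambda>N. m N / real N) \<longlonglongrightarrow> c"
  shows "AE w in M. (\<lambda>N. (\<Sum>s<N. Z s w) / real N) \<longlonglongrightarrow> c"
proof -
  have "strict_mono (\<lambda>k::nat. k\<^sup>2)"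
    by (rule strict_monoI) (simp add: power_strict_mono)
  then have mean_squares: "(\<lambda>k. m (k\<^sup>2) / real (k\<^sup>2)) \<longlonglongrightarrow> c"
    using LIMSEQ_subseq_LIMSEQ[OF mean] by (simp add: comp_def del: of_nat_power)
  have "AE w in M. (\<lambda>k. ((\<Sum>s<k\<^sup>2. Z s w) - m (k\<^sup>2)) / real (k\<^sup>2)) \<longlonglongrightarrow> 0"
    by (rule AE_tendsto_squares_of_second_moment_bound[OF _ integrable bound]) simp
  with AE_space show ?thesis
  proof eventually_elim
    case (elim w)
    have "(\<lambda>k. ((\<Sum>s<k\<^sup>2. Z s w) - m (k\<^sup>2)) / real (k\<^sup>2) + m (k\<^sup>2) / real (k\<^sup>2)) \<longlonglongrightarrow> 0 + c"
      using elim(2) mean_squares by (rule tendsto_add)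
    then have "(\<lambda>k. (\<Sum>s<k\<^sup>2. Z s w) / real (k\<^sup>2)) \<longlonglongrightarrow> c"
      by (simp add: diff_divide_distrib)
    moreover have "mono (\<lambda>N. \<Sum>s<N. Z s w)"
      using elim nonneg by (intro monoI sum_mono2) auto
    ultimately show ?case
      using elim nonneg by (intro tendsto_div_of_tendsto_squares sum_nonneg) auto
  qed
qed

lemma (in prob_space) expectation_centered_indicators:
  assumes [measurable]: "A \<in> events" "B \<in> events"
  shows "expectation (\<lambda>w. (indicator A w - prob A) * (indicator B w - prob B))
    = prob (A \<inter> B) - prob A * prob B"
proof -
  have "(\<lambda>w. (indicator A w - prob A) * (indicator B w - prob B)) =
     (\<lambda>w. indicator (A \<inter> B) w - prob B * indicator A w - (prob A * indicator B w - prob A * prob B))"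
    by (auto simp: indicator_def fun_eq_iff algebra_simps)
  then show ?thesis
    by (simp add: emeasure_eq_measure prob_space)
qed

lemma (in prob_space) integrable_centered_indicators:
  assumes [measurable]: "A \<in> events" "B \<in> events"
  shows "integrable M (\<lambda>w. (indicator A w - prob A) * (indicator B w - prob B) :: real)"
  by (simp add: ring_distribs indicator_inter_arith[symmetric] emeasure_eq_measure)

lemma (in prob_space) expectation_count_deviation_square_le:
  fixes A :: "nat \<Rightarrow> 'a set" and K :: nat
  assumes [measurable]: "\<And>s. A s \<in> events"
    and indep: "\<And>s t. s + K < t \<Longrightarrow> prob (A s \<inter> A t) = prob (A s) * prob (A t)"
  shows "expectation (\<lambda>w. ((\<Sum>s<N. indicator (A s) w) - (\<Sum>s<N. prob (A s)))\<^sup>2)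
    \<le> real (2 * K + 1) * (real N + 1)"
proof -
  define cov where "cov s t = prob (A s \<inter> A t) - prob (A s) * prob (A t)" for s t
  have cov_le: "cov s t \<le> indicator {s - K..s + K} t" for s t
  proof (cases "t \<in> {s - K..s + K}")
    case False
    then show ?thesis
      using indep[of s t] indep[of t s] by (force simp: cov_def Int_commute mult.commute)
  next
    case True
    have "0 \<le> prob (A s) * prob (A t)" by simp
    then have "cov s t \<le> 1"
      unfolding cov_def using prob_le_1[of "A s \<inter> A t"] by linarith
    with True show ?thesis by simp
  qed
  have "expectation (\<lambda>w. ((\<Sum>s<N. indicator (A s) w) - (\<Sum>s<N. prob (A s)))\<^sup>2)
      = expectation (\<lambda>w. \<Sum>s<N. \<Sum>t<N. (indicator (A s) w - prob (A s)) * (indicator (A t) w - prob (A t)))"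
    by (simp add: sum_subtractf[symmetric] power2_eq_square sum_product)
  also have "\<dots> = (\<Sum>s<N. \<Sum>t<N. cov s t)"
    unfolding cov_def by (simp add: expectation_centered_indicators integrable_centered_indicators)
  also have "\<dots> \<le> (\<Sum>s<N. real (2 * K + 1))"
  proof (intro sum_mono)
    fix s
    have "(\<Sum>t<N. cov s t) \<le> (\<Sum>t<N. indicator {s - K..s + K} t)"
      using cov_le by (intro sum_mono)
    also have "\<dots> = real (card ({..<N} \<inter> {s - K..s + K}))"
      by (simp add: indicator_def of_bool_def[symmetric] Int_def)
    also have "\<dots> \<le> real (card {s - K..s + K})"
      by (intro of_nat_mono card_mono) auto
    also have "\<dots> \<le> real (2 * K + 1)"
      by simp
    finally show "(\<Sum>t<N. cov s t) \<le> real (2 * K + 1)" .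
  qed
  also have "\<dots> \<le> real (2 * K + 1) * (real N + 1)"
    by simp
  finally show ?thesis .
qed

lemma (in prob_space) AE_tendsto_frequency_of_finite_range_dependence:
  fixes A :: "nat \<Rightarrow> 'a set" and K :: nat
  assumes [measurable]: "\<And>s. A s \<in> events"
    and indep: "\<And>s t. s + K < t \<Longrightarrow> prob (A s \<inter> A t) = prob (A s) * prob (A t)"
    and mean: "(\<lambda>N. (\<Sum>s<N. prob (A s)) / real N) \<longlonglongrightarrow> c"
  shows "AE w in M. (\<lambda>N. real (card {s\<in>{..<N}. w \<in> A s}) / real N) \<longlonglongrightarrow> c"
proof -
  have "integrable M (\<lambda>w. ((\<Sum>s<N. indicator (A s) w) - (\<Sum>s<N. prob (A s)))\<^sup>2)" for N
    by (simp add: sum_subtractf[symmetric] power2_eq_square sum_product integrable_centered_indicators)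
  then have "AE w in M. (\<lambda>N. (\<Sum>s<N. indicator (A s) w) / real N) \<longlonglongrightarrow> c"
    using expectation_count_deviation_square_le[OF _ indep]
    by (intro AE_tendsto_average_of_variance_bound[OF _ _ _ _ mean]) auto
  then show ?thesis
    by (simp add: indicator_def of_bool_def[symmetric] Int_def)
qed

lemma square_sum3_le: "((a::real) + b + c)\<^sup>2 \<le> 3 * (a\<^sup>2 + b\<^sup>2 + c\<^sup>2)"
proof -
  have "(a + b + c)\<^sup>2 + ((a - b)\<^sup>2 + (b - c)\<^sup>2 + (a - c)\<^sup>2) = 3 * (a\<^sup>2 + b\<^sup>2 + c\<^sup>2)"
    by (simp add: power2_eq_square algebra_simps)
  moreover have "0 \<le> (a - b)\<^sup>2 + (b - c)\<^sup>2 + (a - c)\<^sup>2"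
    by simp
  ultimately show ?thesis
    by linarith
qed

section \<open>Age of information along a sample path\<close>

lemma last_succ_0 [simp]: "last_succ f 0 = -1"
  by (simp add: last_succ_def)

lemma last_succ_Suc: "last_succ f (Suc s) = (if f s then int s else last_succ f s)"
proof (cases "f s")
  case True
  then have "(GREATEST k. k < Suc s \<and> f k) = s"
    by (intro Greatest_equality) auto
  with True show ?thesis by (auto simp: last_succ_def)
next
  case False
  then have "(\<lambda>k. k < Suc s \<and> f k) = (\<lambda>k. k < s \<and> f k)"
    by (auto simp: fun_eq_iff less_Suc_eq)
  with False show ?thesis by (simp add: last_succ_def less_Suc_eq)
qed

lemma disc_aoi_0 [simp]: "disc_aoi f 0 = 2"
  by (simp add: disc_aoi_def)

lemma disc_aoi_Suc: "disc_aoi f (Suc s) = (if f s then 2 else disc_aoi f s + 1)"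
  by (simp add: disc_aoi_def last_succ_Suc)

lemma disc_aoi_ge_iff: "int k + 2 \<le> disc_aoi f s \<longleftrightarrow> k \<le> s \<and> (\<forall>j\<in>{s - k..<s}. \<not> f j)"
proof (induction s arbitrary: k)
  case (Suc s)
  show ?case
  proof (cases k)
    case (Suc k')
    then have "int k + 2 \<le> disc_aoi f (Suc s) \<longleftrightarrow> \<not> f s \<and> int k' + 2 \<le> disc_aoi f s"
      by (auto simp: disc_aoi_Suc)
    also have "\<dots> \<longleftrightarrow> k \<le> Suc s \<and> (\<forall>j\<in>{Suc s - k..<Suc s}. \<not> f j)"
      using Suc by (auto simp: Suc.IH less_Suc_eq)
    finally show ?thesis .
  qed (use Suc.IH[of 0] in \<open>simp add: disc_aoi_Suc\<close>)
qed simp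

lemma two_le_disc_aoi: "2 \<le> disc_aoi f s"
  using disc_aoi_ge_iff[of 0 f s] by simp

lemma disc_aoi_cong: "(\<And>j. j < s \<Longrightarrow> f j = g j) \<Longrightarrow> disc_aoi f s = disc_aoi g s"
  by (induction s) (auto simp: disc_aoi_Suc)

lemma last_succ_le: "last_succ f s \<le> int s - 1"
  by (induction s) (auto simp: last_succ_Suc)

lemma aoi_on_slot:
  assumes "real s \<le> r" "r < real s + 1"
  shows "aoi f r = r - real s - 1 + real_of_int (disc_aoi f s)"
proof -
  from assms have "nat \<lfloor>r\<rfloor> = s" by linarith
  then show ?thesis by (simp add: aoi_def disc_aoi_def)
qed

lemma one_le_aoi: "0 \<le> r \<Longrightarrow> 1 \<le> aoi f r"
  using last_succ_le[of f "nat \<lfloor>r\<rfloor>"] by (simp add: aoi_def) linarith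

lemma has_integral_sum_slots:
  fixes g :: "real \<Rightarrow> real"
  assumes "\<And>s. (g has_integral a s) {real s..real (Suc s)}"
  shows "(g has_integral (\<Sum>s<N. a s)) {0..real N}"
proof (induction N)
  case (Suc N)
  have "(g has_integral (\<Sum>s<N. a s) + a N) {0..real (Suc N)}"
    by (rule has_integral_combine[OF _ _ Suc assms]) auto
  then show ?case by (simp add: add.commute)
qed (auto intro: has_integral_null_real)

lemma has_integral_aoi_slot:
  "(aoi f has_integral (real_of_int (disc_aoi f s) - 1/2)) {real s..real (Suc s)}"
proof -
  let ?c = "real_of_int (disc_aoi f s) - real s - 1"
  have "((\<lambda>r. r + ?c) has_integral (real_of_int (disc_aoi f s) - 1/2)) {real s..real (Suc s)}"
    by (rule has_integral_eq_rhs[OF has_integral_add[OF ident_has_integral has_integral_const_real]])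
       (simp_all add: power2_eq_square algebra_simps)
  then show ?thesis
  proof (rule has_integral_spike_finite[where S="{real (Suc s)}", rotated 2])
    fix r assume "r \<in> {real s..real (Suc s)} - {real (Suc s)}"
    then have "real s \<le> r" "r < real s + 1"
      by auto
    then show "aoi f r = r + ?c"
      by (simp add: aoi_on_slot)
  qed simp
qed

lemma has_integral_aoi:
  "(aoi f has_integral (\<Sum>s<N. real_of_int (disc_aoi f s) - 1/2)) {0..real N}"
  by (rule has_integral_sum_slots[OF has_integral_aoi_slot])

lemma has_integral_aoi_gt_slot:
  "((\<lambda>r. of_bool (real \<theta> < aoi f r)) has_integral of_bool (int \<theta> + 1 \<le> disc_aoi f s))
     {real s..real (Suc s)}"
proof (rule has_integral_spike_finite[where S="{real s, real (Suc s)}"])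
  show "((\<lambda>r. of_bool (int \<theta> + 1 \<le> disc_aoi f s)) has_integral of_bool (int \<theta> + 1 \<le> disc_aoi f s))
      {real s..real (Suc s)}"
    by (rule has_integral_eq_rhs[OF has_integral_const_real]) simp
  fix r assume "r \<in> {real s..real (Suc s)} - {real s, real (Suc s)}"
  then have "aoi f r = r - real s - 1 + real_of_int (disc_aoi f s)" and "real s < r" "r < real s + 1"
    by (auto intro: aoi_on_slot)
  \<comment> \<open>inside the slot the AoI lies strictly between the integers disc_aoi f s - 1 and disc_aoi f s\<close>
  moreover have "int \<theta> + 1 \<le> disc_aoi f s \<longleftrightarrow> real \<theta> + 1 \<le> real_of_int (disc_aoi f s)"
    by linarith
  ultimately show "of_bool (real \<theta> < aoi f r) = of_bool (int \<theta> + 1 \<le> disc_aoi f s)"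
    by auto
qed simp

lemma borel_measurable_aoi [measurable]: "aoi f \<in> borel_measurable borel"
  unfolding aoi_def by measurable

lemma measure_aoi_gt:
  "measure lborel {r\<in>{0..real N}. real \<theta> < aoi f r} = real (card {s\<in>{..<N}. int \<theta> + 1 \<le> disc_aoi f s})"
proof -
  have "((\<lambda>r. of_bool (real \<theta> < aoi f r)) has_integral real (card {s\<in>{..<N}. int \<theta> + 1 \<le> disc_aoi f s}))
      {0..real N}"
    using has_integral_sum_slots[OF has_integral_aoi_gt_slot, of \<theta> f N] by (simp add: Int_def)
  then have "((\<lambda>r. if r \<in> {r\<in>{0..real N}. real \<theta> < aoi f r} then 1 else 0) has_integral
      real (card {s\<in>{..<N}. int \<theta> + 1 \<le> disc_aoi f s})) {0..real N}"
    by (subst has_integral_cong[where g="\<lambda>r. of_bool (real \<theta> < aoi f r)"]) auto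
  then have "((\<lambda>r. 1) has_integral real (card {s\<in>{..<N}. int \<theta> + 1 \<le> disc_aoi f s}))
      {r\<in>{0..real N}. real \<theta> < aoi f r}"
    by (subst (asm) has_integral_restrict) auto
  moreover have "{r\<in>{0..real N}. real \<theta> < aoi f r} \<in> sets borel"
    by measurable
  ultimately show ?thesis
    by (simp add: has_integral_iff_emeasure_lborel measure_def)
qed

lemma tendsto_div_at_top_of_mono:
  fixes F :: "real \<Rightarrow> real"
  assumes mono: "\<And>a b. 0 \<le> a \<Longrightarrow> a \<le> b \<Longrightarrow> F a \<le> F b"
    and nonneg: "\<And>n. 0 \<le> F (real n)"
    and lim: "(\<lambda>N. F (real N) / real N) \<longlonglongrightarrow> c"
  shows "((\<lambda>t. F t / t) \<longlongrightarrow> c) at_top"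
proof -
  define lower where "lower N = F (real N) / real N * (real N / real (Suc N))" for N
  define upper where "upper N = F (real (Suc N)) / real (Suc N) * (real (Suc N) / real N)" for N
  have floor: "filterlim (\<lambda>t::real. nat \<lfloor>t\<rfloor>) sequentially at_top"
    by (rule filterlim_compose[OF filterlim_nat_sequentially filterlim_floor_sequentially])
  have "lower \<longlonglongrightarrow> c * 1" "upper \<longlonglongrightarrow> c * 1"
    unfolding lower_def upper_def
    by (intro tendsto_intros lim LIMSEQ_Suc[OF lim] LIMSEQ_n_over_Suc_n LIMSEQ_Suc_n_over_n)+
  then have "((\<lambda>t::real. lower (nat \<lfloor>t\<rfloor>)) \<longlongrightarrow> c) at_top"
    and "((\<lambda>t::real. upper (nat \<lfloor>t\<rfloor>)) \<longlongrightarrow> c) at_top"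
    by (simp_all add: filterlim_compose[OF _ floor])
  then show ?thesis
  proof (rule tendsto_sandwich[rotated 2];
         unfold eventually_at_top_linorder; intro exI[of _ 1] allI impI)
    fix t :: real assume "1 \<le> t"
    define n where "n = nat \<lfloor>t\<rfloor>"
    have n: "real n \<le> t" "t < real (Suc n)" "1 \<le> n"
      unfolding n_def using \<open>1 \<le> t\<close> by linarith+
    then have "0 \<le> F t"
      using nonneg[of n] mono[of "real n" t] by simp
    have "lower n = F (real n) / real (Suc n)"
      using n by (simp add: lower_def)
    also have "\<dots> \<le> F t / t"
      using n \<open>0 \<le> F t\<close> by (intro frac_le mono) auto
    finally show "lower (nat \<lfloor>t\<rfloor>) \<le> F t / t" by (simp add: n_def)
    have "F t / t \<le> F (real (Suc n)) / real n"
      using n nonneg[of "Suc n"] \<open>0 \<le> F t\<close> by (intro frac_le mono) auto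
    also have "\<dots> = upper n"
      by (simp add: upper_def del: of_nat_Suc)
    finally show "F t / t \<le> upper (nat \<lfloor>t\<rfloor>)" by (simp add: n_def)
  qed
qed

lemma integral_aoi_mono:
  assumes "0 \<le> a" "a \<le> b"
  shows "integral {0..a} (aoi f) \<le> integral {0..b} (aoi f)"
proof -
  have "aoi f integrable_on {0..real (nat \<lceil>b\<rceil>)}"
    using has_integral_aoi by blast
  then have "aoi f integrable_on {0..b}"
    by (rule integrable_subinterval_real) auto
  then have "integral {0..b} (aoi f) = integral {0..a} (aoi f) + integral {a..b} (aoi f)"
    and "aoi f integrable_on {a..b}"
    using assms
    by (auto simp: Henstock_Kurzweil_Integration.integral_combine intro: integrable_subinterval_real)
  moreover have "0 \<le> integral {a..b} (aoi f)"
    using \<open>aoi f integrable_on {a..b}\<close> assms one_le_aoi[of _ f]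
    by (intro integral_nonneg) (auto intro: order_trans[of 0 1])
  ultimately show ?thesis by simp
qed

lemma aoi_time_average:
  assumes "(\<lambda>N. (\<Sum>s<N. real_of_int (disc_aoi f s)) / real N) \<longlonglongrightarrow> c"
  shows "((\<lambda>t. integral {0..t} (aoi f) / t) \<longlongrightarrow> c - 1/2) at_top"
proof (rule tendsto_div_at_top_of_mono)
  show "integral {0..a} (aoi f) \<le> integral {0..b} (aoi f)" if "0 \<le> a" "a \<le> b" for a b
    using integral_aoi_mono that .
  show "0 \<le> integral {0..real n} (aoi f)" for n
    using integral_aoi_mono[of 0 "real n" f] by simp
  have "integral {0..real N} (aoi f) = (\<Sum>s<N. real_of_int (disc_aoi f s)) - real N / 2" for N
    using integral_unique[OF has_integral_aoi[of f N]] by (simp add: sum_subtractf)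
  then have "(\<Sum>s<N. real_of_int (disc_aoi f s)) / real N - 1/2 = integral {0..real N} (aoi f) / real N"
    if "1 \<le> N" for N
    using that by (simp add: diff_divide_distrib)
  then show "(\<lambda>N. integral {0..real N} (aoi f) / real N) \<longlonglongrightarrow> c - 1/2"
    by (intro Lim_transform_eventually[OF tendsto_diff[OF assms tendsto_const]])
       (auto simp: eventually_sequentially)
qed

lemma aoi_violation_time_average:
  assumes "(\<lambda>N. real (card {s\<in>{..<N}. int \<theta> + 1 \<le> disc_aoi f s}) / real N) \<longlonglongrightarrow> c"
  shows "((\<lambda>t. measure lborel {r\<in>{0..t}. real \<theta> < aoi f r} / t) \<longlongrightarrow> c) at_top"
proof (rule tendsto_div_at_top_of_mono)
  show "measure lborel {r\<in>{0..a}. real \<theta> < aoi f r} \<le> measure lborel {r\<in>{0..b}. real \<theta> < aoi f r}"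
    if "0 \<le> a" "a \<le> b" for a b
  proof (rule measure_mono_fmeasurable)
    have "{0..b} \<in> fmeasurable lborel"
      using that by (simp add: fmeasurable_def)
    then show "{r\<in>{0..b}. real \<theta> < aoi f r} \<in> fmeasurable lborel"
      by (rule fmeasurableI2) auto
  next
    show "{r\<in>{0..a}. real \<theta> < aoi f r} \<subseteq> {r\<in>{0..b}. real \<theta> < aoi f r}"
      using that by auto
  qed measurable
  show "0 \<le> measure lborel {r\<in>{0..real n}. real \<theta> < aoi f r}" for n
    by simp
  show "(\<lambda>N. measure lborel {r\<in>{0..real N}. real \<theta> < aoi f r} / real N) \<longlonglongrightarrow> c"
    using assms by (simp only: measure_aoi_gt)
qed

lemma tendsto_frequency_diff:
  assumes "\<And>s. Q s \<Longrightarrow> P s"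
    and "(\<lambda>N. real (card {s\<in>{..<N}. P s}) / real N) \<longlonglongrightarrow> a"
    and "(\<lambda>N. real (card {s\<in>{..<N}. Q s}) / real N) \<longlonglongrightarrow> b"
  shows "(\<lambda>N. real (card {s\<in>{..<N}. P s \<and> \<not> Q s}) / real N) \<longlonglongrightarrow> a - b"
proof -
  have "{s\<in>{..<N}. P s \<and> \<not> Q s} = {s\<in>{..<N}. P s} - {s\<in>{..<N}. Q s}"
    and "{s\<in>{..<N}. Q s} \<subseteq> {s\<in>{..<N}. P s}" for N
    using assms(1) by auto
  then have "real (card {s\<in>{..<N}. P s \<and> \<not> Q s}) / real N
      = real (card {s\<in>{..<N}. P s}) / real N - real (card {s\<in>{..<N}. Q s}) / real N" for N
    by (simp add: card_Diff_subset card_mono diff_divide_distrib)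
  with assms(2,3) show ?thesis
    by (simp add: tendsto_diff)
qed

lemma last_succ_enumerate_Suc:
  assumes S: "infinite {s. f s}"
  shows "last_succ f (enumerate {s. f s} (Suc i)) = int (enumerate {s. f s} i)"
proof -
  let ?e = "enumerate {s. f s}"
  have "?e i < ?e (Suc i)" and "f (?e i)"
    using enumerate_step[OF S] enumerate_in_set[OF S] by auto
  moreover have "(GREATEST k. k < ?e (Suc i) \<and> f k) = ?e i"
  proof (rule Greatest_equality)
    fix y assume y: "y < ?e (Suc i) \<and> f y"
    then obtain m where m: "?e m = y"
      using enumerate_Ex[OF S, of y] by auto
    with y have "m < Suc i"
      using enumerate_mono_iff[OF S, of m "Suc i"] by simp
    with m show "y \<le> ?e i"
      using enumerate_mono_le_iff[OF S, of m i] by simp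
  qed (use calculation in simp)
  ultimately show ?thesis
    unfolding last_succ_def by auto
qed

lemma peak_aoi_Suc:
  "infinite {s. f s} \<Longrightarrow> peak_aoi f (Suc i) = disc_aoi f (succ_slot f (Suc i))"
  by (simp add: peak_aoi_def disc_aoi_def succ_slot_def last_succ_enumerate_Suc)

lemma succ_slots_before:
  assumes S: "infinite {s. f s}"
  shows "{s\<in>{..<Suc (succ_slot f n)}. f s} = succ_slot f ` {..n}"
proof (intro equalityI subsetI)
  fix s assume s: "s \<in> {s\<in>{..<Suc (succ_slot f n)}. f s}"
  obtain m where "enumerate {s. f s} m = s"
    using enumerate_Ex[OF S] s by auto
  moreover from this s have "m \<le> n"
    using enumerate_mono_le_iff[OF S, of m n] by (simp add: succ_slot_def less_Suc_eq_le)
  ultimately show "s \<in> succ_slot f ` {..n}"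
    by (auto simp: succ_slot_def)
next
  fix s assume "s \<in> succ_slot f ` {..n}"
  then obtain m where m: "m \<le> n" "s = enumerate {s. f s} m"
    by (auto simp: succ_slot_def)
  then have "enumerate {s. f s} m \<le> enumerate {s. f s} n"
    using enumerate_mono_le_iff[OF S] by simp
  then show "s \<in> {s\<in>{..<Suc (succ_slot f n)}. f s}"
    using m enumerate_in_set[OF S, of m] by (auto simp: succ_slot_def)
qed

lemma card_succ_slots_before:
  assumes S: "infinite {s. f s}"
  shows "card {s\<in>{..<Suc (succ_slot f n)}. f s \<and> P s} = card {k\<in>{..n}. P (succ_slot f k)}"
proof -
  have "{s\<in>{..<Suc (succ_slot f n)}. f s \<and> P s} = {s\<in>succ_slot f ` {..n}. P s}"
    using succ_slots_before[OF S, of n] by blast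
  also have "\<dots> = succ_slot f ` {k\<in>{..n}. P (succ_slot f k)}"
    by auto
  finally have "{s\<in>{..<Suc (succ_slot f n)}. f s \<and> P s} = succ_slot f ` {k\<in>{..n}. P (succ_slot f k)}" .
  moreover have "inj_on (succ_slot f) {k\<in>{..n}. P (succ_slot f k)}"
    using inj_enumerate[OF S] unfolding succ_slot_def by (rule inj_on_subset) simp
  ultimately show ?thesis
    by (simp add: card_image)
qed

lemma infinite_of_frequency_pos:
  assumes "(\<lambda>N. real (card {s\<in>{..<N}. f s}) / real N) \<longlonglongrightarrow> xi" and "0 < xi"
  shows "infinite {s. f s}"
proof
  assume fin: "finite {s. f s}"
  then have "real (card {s\<in>{..<N}. f s}) / real N \<le> real (card {s. f s}) / real N" for N
    by (intro divide_right_mono of_nat_mono card_mono) auto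
  then have "xi \<le> 0"
    using LIMSEQ_le[OF assms(1) lim_const_over_n] by blast
  with \<open>0 < xi\<close> show False by simp
qed

lemma tendsto_frequency_succ_slots:
  assumes succ: "(\<lambda>N. real (card {s\<in>{..<N}. f s}) / real N) \<longlonglongrightarrow> xi" and "0 < xi"
    and marked: "(\<lambda>N. real (card {s\<in>{..<N}. f s \<and> P s}) / real N) \<longlonglongrightarrow> p"
  shows "(\<lambda>n. real (card {k\<in>{..n}. P (succ_slot f k)}) / real n) \<longlonglongrightarrow> p / xi"
proof -
  have S: "infinite {s. f s}"
    using infinite_of_frequency_pos[OF succ \<open>0 < xi\<close>] .
  define T where "T n = Suc (succ_slot f n)" for n
  have "n \<le> T n" for n
    using le_enumerate[OF S, of n] by (simp add: T_def succ_slot_def)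
  then have T: "filterlim T sequentially sequentially"
    by (metis filterlim_at_top eventually_sequentially order_trans)
  have "(\<lambda>n. real (Suc n) / real (T n)) \<longlonglongrightarrow> xi"
    using filterlim_compose[OF succ T] card_succ_slots_before[OF S, where P="\<lambda>_. True"]
    by (simp add: T_def)
  then have "(\<lambda>n. inverse (real (Suc n) / real (T n))) \<longlonglongrightarrow> inverse xi"
    using \<open>0 < xi\<close> by (intro tendsto_inverse) auto
  then have "(\<lambda>n. real (card {s\<in>{..<T n}. f s \<and> P s}) / real (T n) * (real (T n) / real (Suc n))
      * (real (Suc n) / real n)) \<longlonglongrightarrow> p * inverse xi * 1"
    by (intro tendsto_mult filterlim_compose[OF marked T] LIMSEQ_Suc_n_over_n) simp
  moreover have "real (card {s\<in>{..<T n}. f s \<and> P s}) / real (T n) * (real (T n) / real (Suc n))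
      * (real (Suc n) / real n) = real (card {k\<in>{..n}. P (succ_slot f k)}) / real n" if "1 \<le> n" for n
    using that card_succ_slots_before[OF S, of n P] by (simp add: T_def del: of_nat_Suc)
  then have "eventually (\<lambda>n. real (card {s\<in>{..<T n}. f s \<and> P s}) / real (T n) * (real (T n) / real (Suc n))
      * (real (Suc n) / real n) = real (card {k\<in>{..n}. P (succ_slot f k)}) / real n) sequentially"
    unfolding eventually_sequentially by blast
  ultimately show ?thesis
    by (rule Lim_transform_eventually[THEN tendsto_eq_rhs]) (simp add: divide_inverse)
qed

lemma card_atMost_filter:
  "card {k\<in>{..n::nat}. Q k} = card {k\<in>{1..n}. Q k} + of_bool (Q 0)"
proof -
  have "{k\<in>{..n}. Q k} = {k\<in>{1..n}. Q k} \<union> {k\<in>{0}. Q k}"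
    by auto
  moreover have "card ({k\<in>{1..n}. Q k} \<union> {k\<in>{0}. Q k}) = card {k\<in>{1..n}. Q k} + card {k\<in>{0}. Q k}"
    by (rule card_Un_disjoint) auto
  moreover have "{k\<in>{0::nat}. Q k} = (if Q 0 then {0} else {})"
    by auto
  then have "card {k\<in>{0::nat}. Q k} = of_bool (Q 0)"
    by simp
  ultimately show ?thesis
    by simp
qed

lemma tendsto_peak_aoi_frequency:
  assumes succ: "(\<lambda>N. real (card {s\<in>{..<N}. f s}) / real N) \<longlonglongrightarrow> xi" and "0 < xi"
    and delta: "(\<lambda>N. real (card {s\<in>{..<N}. f s \<and> disc_aoi f s = int \<delta>}) / real N) \<longlonglongrightarrow> p"
  shows "(\<lambda>n. real (card {k\<in>{1..n}. peak_aoi f k = int \<delta>}) / real n) \<longlonglongrightarrow> p / xi"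
proof -
  let ?Q = "\<lambda>k. disc_aoi f (succ_slot f k) = int \<delta>"
  have S: "infinite {s. f s}"
    using infinite_of_frequency_pos[OF succ \<open>0 < xi\<close>] .
  have "peak_aoi f k = disc_aoi f (succ_slot f k)" if "1 \<le> k" for k
    using that peak_aoi_Suc[OF S, of "k - 1"] by simp
  then have peak: "{k\<in>{1..n}. peak_aoi f k = int \<delta>} = {k\<in>{1..n}. ?Q k}" for n
    by auto
  have "real (card {k\<in>{1..n}. peak_aoi f k = int \<delta>}) / real n
      = real (card {k\<in>{..n}. ?Q k}) / real n - of_bool (?Q 0) / real n" for n
    unfolding peak card_atMost_filter[of n ?Q] by (simp add: add_divide_distrib)
  moreover have "(\<lambda>n. real (card {k\<in>{..n}. ?Q k}) / real n - of_bool (?Q 0) / real n) \<longlonglongrightarrow> p / xi - 0"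
    using succ \<open>0 < xi\<close> delta by (intro tendsto_diff tendsto_frequency_succ_slots lim_const_over_n)
  ultimately show ?thesis
    by simp
qed

section \<open>Bernoulli sequences\<close>

locale bernoulli_seq = prob_space M for M :: "'a measure" +
  fixes x :: "nat \<Rightarrow> 'a \<Rightarrow> bool" and xi :: real
  assumes sets_success: "\<And>j. {w\<in>space M. x j w} \<in> events"
    and prob_pattern: "\<And>J c. finite J \<Longrightarrow>
      prob {w\<in>space M. \<forall>j\<in>J. x j w = c j} = (\<Prod>j\<in>J. if c j then xi else 1 - xi)"
    and xi_pos: "0 < xi" and xi_le_1: "xi \<le> 1"
begin

lemma measurable_success [measurable]: "x j \<in> measurable M (count_space UNIV)"
  using sets_success by (simp add: Measurable.pred_def)

lemma sets_pattern [measurable]: "finite J \<Longrightarrow> {w\<in>space M. \<forall>j\<in>J. x j w = c j} \<in> events"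
  by measurable

lemma prob_pattern_Int:
  assumes "finite A" "finite B" "A \<inter> B = {}"
  shows "prob ({w\<in>space M. \<forall>j\<in>A. x j w = c j} \<inter> {w\<in>space M. \<forall>j\<in>B. x j w = d j})
       = prob {w\<in>space M. \<forall>j\<in>A. x j w = c j} * prob {w\<in>space M. \<forall>j\<in>B. x j w = d j}"
proof -
  let ?e = "\<lambda>j. if j \<in> A then c j else d j"
  let ?p = "\<lambda>b. if b then xi else 1 - xi"
  have "{w\<in>space M. \<forall>j\<in>A. x j w = c j} \<inter> {w\<in>space M. \<forall>j\<in>B. x j w = d j}
      = {w\<in>space M. \<forall>j\<in>A \<union> B. x j w = ?e j}"
    using assms(3) by auto
  then have "prob ({w\<in>space M. \<forall>j\<in>A. x j w = c j} \<inter> {w\<in>space M. \<forall>j\<in>B. x j w = d j})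
      = (\<Prod>j\<in>A. ?p (?e j)) * (\<Prod>j\<in>B. ?p (?e j))"
    using assms by (simp add: prob_pattern prod.union_disjoint)
  also have "\<dots> = (\<Prod>j\<in>A. ?p (c j)) * (\<Prod>j\<in>B. ?p (d j))"
    using assms(3) by (auto intro!: arg_cong2[where f="(*)"] prod.cong)
  finally show ?thesis
    using assms by (simp add: prob_pattern)
qed

definition aoi_ge_event :: "nat \<Rightarrow> bool \<Rightarrow> nat \<Rightarrow> 'a set" where
  "aoi_ge_event k e s = {w\<in>space M. int k + 2 \<le> disc_aoi (\<lambda>j. x j w) s \<and> (e \<longrightarrow> x s w)}"

lemma aoi_ge_event_eq_pattern:
  "k \<le> s \<Longrightarrow> aoi_ge_event k e s
     = {w\<in>space M. \<forall>j\<in>{s - k..<s} \<union> (if e then {s} else {}). x j w = (j = s)}"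
  by (auto simp: aoi_ge_event_def disc_aoi_ge_iff)

lemma aoi_ge_event_empty: "s < k \<Longrightarrow> aoi_ge_event k e s = {}"
  by (auto simp: aoi_ge_event_def disc_aoi_ge_iff)

lemma sets_aoi_ge_event [measurable]: "aoi_ge_event k e s \<in> events"
  by (cases "k \<le> s") (simp_all add: aoi_ge_event_eq_pattern aoi_ge_event_empty)

lemma prob_aoi_ge_event:
  "prob (aoi_ge_event k e s) = of_bool (k \<le> s) * (1 - xi) ^ k * (if e then xi else 1)"
proof (cases "k \<le> s")
  case True
  then have "prob (aoi_ge_event k e s)
      = (\<Prod>j\<in>{s - k..<s} \<union> (if e then {s} else {}). if j = s then xi else 1 - xi)"
    by (simp add: aoi_ge_event_eq_pattern prob_pattern)
  also have "\<dots> = (1 - xi) ^ k * (if e then xi else 1)"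
    using True by (simp add: prod.union_disjoint)
  finally show ?thesis
    using True by simp
qed (simp add: aoi_ge_event_empty)

lemma prob_aoi_ge_event_Int:
  assumes "s + k < t"
  shows "prob (aoi_ge_event k e s \<inter> aoi_ge_event k e t)
    = prob (aoi_ge_event k e s) * prob (aoi_ge_event k e t)"
proof (cases "k \<le> s")
  case True
  with assms show ?thesis
    by (simp add: aoi_ge_event_eq_pattern prob_pattern_Int)
qed (simp add: aoi_ge_event_empty)

lemma AE_frequency_aoi_ge_event:
  "AE w in M. (\<lambda>N. real (card {s\<in>{..<N}. w \<in> aoi_ge_event k e s}) / real N)
     \<longlonglongrightarrow> (1 - xi) ^ k * (if e then xi else 1)"
proof (rule AE_tendsto_frequency_of_finite_range_dependence[where K=k])
  let ?c = "(1 - xi) ^ k * (if e then xi else 1)"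
  have "{s. s < N \<and> k \<le> s} = {k..<N}" for N
    by auto
  then have "(\<Sum>s<N. prob (aoi_ge_event k e s)) = ?c * real (N - k)" for N
    by (simp add: prob_aoi_ge_event sum_distrib_right[symmetric] Int_def)
  moreover have "(\<lambda>N. ?c * (1 - real k / real N)) \<longlonglongrightarrow> ?c * (1 - 0)"
    by (intro tendsto_intros lim_const_over_n)
  then have "(\<lambda>N. ?c * real (N - k) / real N) \<longlonglongrightarrow> ?c"
    by (rule Lim_transform_eventually[THEN tendsto_eq_rhs])
       (auto simp: eventually_sequentially of_nat_diff field_simps intro!: exI[of _ "Suc k"])
  ultimately show "(\<lambda>N. (\<Sum>s<N. prob (aoi_ge_event k e s)) / real N) \<longlonglongrightarrow> ?c"
    by simp
qed (simp_all add: prob_aoi_ge_event_Int)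

lemma AE_frequency_disc_aoi_eq:
  assumes "2 \<le> \<delta>"
  shows "AE w in M. (\<lambda>N. real (card {s\<in>{..<N}. disc_aoi (\<lambda>j. x j w) s = int \<delta>}) / real N)
    \<longlonglongrightarrow> xi * (1 - xi) ^ (\<delta> - 2)"
  using AE_space AE_frequency_aoi_ge_event[of "\<delta> - 2" False]
    AE_frequency_aoi_ge_event[of "Suc (\<delta> - 2)" False]
proof eventually_elim
  case (elim w)
  have "(\<lambda>N. real (card {s\<in>{..<N}. w \<in> aoi_ge_event (\<delta> - 2) False s \<and>
      w \<notin> aoi_ge_event (Suc (\<delta> - 2)) False s}) / real N) \<longlonglongrightarrow> (1 - xi) ^ (\<delta> - 2) - (1 - xi) ^ Suc (\<delta> - 2)"
    using elim by (intro tendsto_frequency_diff) (auto simp: aoi_ge_event_def)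
  moreover have "w \<in> aoi_ge_event (\<delta> - 2) False s \<and> w \<notin> aoi_ge_event (Suc (\<delta> - 2)) False s
      \<longleftrightarrow> disc_aoi (\<lambda>j. x j w) s = int \<delta>" for s
    using elim(1) assms by (auto simp: aoi_ge_event_def)
  ultimately show ?case
    by (simp add: algebra_simps)
qed

lemma AE_frequency_success_disc_aoi_eq:
  assumes "2 \<le> \<delta>"
  shows "AE w in M. (\<lambda>N. real (card {s\<in>{..<N}. x s w \<and> disc_aoi (\<lambda>j. x j w) s = int \<delta>}) / real N)
    \<longlonglongrightarrow> xi * (xi * (1 - xi) ^ (\<delta> - 2))"
  using AE_space AE_frequency_aoi_ge_event[of "\<delta> - 2" True]
    AE_frequency_aoi_ge_event[of "Suc (\<delta> - 2)" True]
proof eventually_elim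
  case (elim w)
  have "(\<lambda>N. real (card {s\<in>{..<N}. w \<in> aoi_ge_event (\<delta> - 2) True s \<and>
      w \<notin> aoi_ge_event (Suc (\<delta> - 2)) True s}) / real N)
      \<longlonglongrightarrow> (1 - xi) ^ (\<delta> - 2) * xi - (1 - xi) ^ Suc (\<delta> - 2) * xi"
    using elim by (intro tendsto_frequency_diff) (auto simp: aoi_ge_event_def)
  moreover have "w \<in> aoi_ge_event (\<delta> - 2) True s \<and> w \<notin> aoi_ge_event (Suc (\<delta> - 2)) True s
      \<longleftrightarrow> x s w \<and> disc_aoi (\<lambda>j. x j w) s = int \<delta>" for s
    using elim(1) assms by (auto simp: aoi_ge_event_def)
  ultimately show ?case
    by (simp add: algebra_simps)
qed

lemma AE_frequency_success:
  "AE w in M. (\<lambda>N. real (card {s\<in>{..<N}. x s w}) / real N) \<longlonglongrightarrow> xi"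
  using AE_space AE_frequency_aoi_ge_event[of 0 True]
  by eventually_elim (simp add: aoi_ge_event_def two_le_disc_aoi)

lemma AE_frequency_peak_aoi_eq:
  assumes "2 \<le> \<delta>"
  shows "AE w in M. (\<lambda>n. real (card {k\<in>{1..n}. peak_aoi (\<lambda>j. x j w) k = int \<delta>}) / real n)
    \<longlonglongrightarrow> xi * (1 - xi) ^ (\<delta> - 2)"
  using AE_frequency_success AE_frequency_success_disc_aoi_eq[OF assms]
proof eventually_elim
  case (elim w)
  from tendsto_peak_aoi_frequency[OF elim(1) xi_pos elim(2)] show ?case
    using xi_pos by simp
qed

lemma AE_age_violation:
  assumes "1 \<le> \<theta>"
  shows "AE w in M. ((\<lambda>t. measure lborel {r\<in>{0..t}. real \<theta> < aoi (\<lambda>j. x j w) r} / t)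
    \<longlongrightarrow> (1 - xi) ^ (\<theta> - 1)) at_top"
  using AE_space AE_frequency_aoi_ge_event[of "\<theta> - 1" False]
proof eventually_elim
  case (elim w)
  have "w \<in> aoi_ge_event (\<theta> - 1) False s \<longleftrightarrow> int \<theta> + 1 \<le> disc_aoi (\<lambda>j. x j w) s" for s
    using elim(1) assms by (auto simp: aoi_ge_event_def)
  with elim(2) show ?case
    by (intro aoi_violation_time_average) simp
qed

subsection \<open>Random variables determined by a prefix\<close>

definition determined_by_prefix :: "nat \<Rightarrow> ('a \<Rightarrow> 'b) \<Rightarrow> bool" where
  "determined_by_prefix t X \<longleftrightarrow> (\<forall>w\<in>space M. \<forall>v\<in>space M. (\<forall>j<t. x j w = x j v) \<longrightarrow> X w = X v)"

definition prefix_event :: "nat \<Rightarrow> nat set \<Rightarrow> 'a set" where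
  "prefix_event t A = {w\<in>space M. \<forall>j\<in>{..<t}. x j w = (j \<in> A)}"

lemma sets_prefix_event [measurable]: "prefix_event t A \<in> events"
  by (simp add: prefix_event_def)

lemma determined_by_prefixI:
  "(\<And>w v. w \<in> space M \<Longrightarrow> v \<in> space M \<Longrightarrow> (\<And>j. j < t \<Longrightarrow> x j w = x j v) \<Longrightarrow> X w = X v)
    \<Longrightarrow> determined_by_prefix t X"
  unfolding determined_by_prefix_def by blast

lemma determined_by_prefixD:
  "determined_by_prefix t X \<Longrightarrow> w \<in> space M \<Longrightarrow> v \<in> space M \<Longrightarrow> (\<And>j. j < t \<Longrightarrow> x j w = x j v)
    \<Longrightarrow> X w = X v"
  unfolding determined_by_prefix_def by blast

lemma determined_by_prefix_mono: "determined_by_prefix t X \<Longrightarrow> t \<le> t' \<Longrightarrow> determined_by_prefix t' X"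
  by (intro determined_by_prefixI) (erule determined_by_prefixD; simp)

lemma determined_by_prefix_const: "determined_by_prefix t (\<lambda>w. c)"
  by (intro determined_by_prefixI) (rule refl)

lemma determined_by_prefix_success: "j < t \<Longrightarrow> determined_by_prefix t (\<lambda>w. of_bool (x j w))"
  by (intro determined_by_prefixI) simp

lemma determined_by_prefix_add:
  "determined_by_prefix t X \<Longrightarrow> determined_by_prefix t Y \<Longrightarrow> determined_by_prefix t (\<lambda>w. X w + Y w)"
  by (intro determined_by_prefixI) (metis determined_by_prefixD)

lemma determined_by_prefix_diff:
  "determined_by_prefix t X \<Longrightarrow> determined_by_prefix t Y \<Longrightarrow> determined_by_prefix t (\<lambda>w. X w - Y w)"
  by (intro determined_by_prefixI) (metis determined_by_prefixD)

lemma determined_by_prefix_mult: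
  "determined_by_prefix t X \<Longrightarrow> determined_by_prefix t Y \<Longrightarrow> determined_by_prefix t (\<lambda>w. X w * Y w)"
  by (intro determined_by_prefixI) (metis determined_by_prefixD)

lemma determined_by_prefix_divide:
  "determined_by_prefix t X \<Longrightarrow> determined_by_prefix t Y \<Longrightarrow> determined_by_prefix t (\<lambda>w. X w / Y w)"
  by (intro determined_by_prefixI) (metis determined_by_prefixD)

lemma determined_by_prefix_power:
  "determined_by_prefix t X \<Longrightarrow> determined_by_prefix t (\<lambda>w. X w ^ n)"
  by (intro determined_by_prefixI) (metis determined_by_prefixD)

lemma determined_by_prefix_sum:
  "(\<And>i. i \<in> I \<Longrightarrow> determined_by_prefix t (X i)) \<Longrightarrow> determined_by_prefix t (\<lambda>w. \<Sum>i\<in>I. X i w)"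
  by (intro determined_by_prefixI sum.cong refl) (metis determined_by_prefixD)

lemmas determined_by_prefix_intros = determined_by_prefix_const determined_by_prefix_success
  determined_by_prefix_add determined_by_prefix_diff determined_by_prefix_mult
  determined_by_prefix_divide determined_by_prefix_power determined_by_prefix_sum

lemma prob_prefix_event_success:
  assumes "A \<subseteq> {..<t}"
  shows "prob (prefix_event t A \<inter> {w\<in>space M. x t w}) = xi * prob (prefix_event t A)"
proof -
  have "prob (prefix_event t A \<inter> {w\<in>space M. x t w})
      = prob {w\<in>space M. \<forall>j\<in>insert t {..<t}. x j w = (j \<in> insert t A)}"
    using assms by (intro arg_cong[where f=prob]) (auto simp: prefix_event_def)
  also have "\<dots> = xi * (\<Prod>j\<in>{..<t}. if j \<in> insert t A then xi else 1 - xi)"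
    using prob_pattern[of "insert t {..<t}" "\<lambda>j. j \<in> insert t A"] by simp
  also have "(\<Prod>j\<in>{..<t}. if j \<in> insert t A then xi else 1 - xi) = prob (prefix_event t A)"
    by (simp add: prefix_event_def prob_pattern)
  finally show ?thesis .
qed

text \<open>A prefix-determined variable is a combination of the indicators of the \<open>2^t\<close> prefix
  patterns, with coefficients read off at a representative of each pattern; for an empty pattern
  the \<open>SOME\<close> is arbitrary but multiplied by a zero indicator.\<close>

lemma prefix_expansion:
  fixes X :: "'a \<Rightarrow> real"
  assumes X: "determined_by_prefix t X" and "w \<in> space M"
  shows "X w = (\<Sum>A\<in>Pow {..<t}. X (SOME v. v \<in> prefix_event t A) * indicator (prefix_event t A) w)"
proof -
  let ?A = "{j. j < t \<and> x j w}"
  have "w \<in> prefix_event t A \<longleftrightarrow> A = ?A" if "A \<subseteq> {..<t}" for A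
    using that \<open>w \<in> space M\<close> by (auto simp: prefix_event_def)
  then have "(\<Sum>A\<in>Pow {..<t}. X (SOME v. v \<in> prefix_event t A) * indicator (prefix_event t A) w)
      = (\<Sum>A\<in>Pow {..<t}. if A = ?A then X (SOME v. v \<in> prefix_event t A) else 0)"
    by (intro sum.cong) (auto simp: indicator_def)
  also have "\<dots> = X (SOME v. v \<in> prefix_event t ?A)"
    by (simp add: subset_eq)
  also have "\<dots> = X w"
  proof -
    have "w \<in> prefix_event t ?A"
      using \<open>w \<in> space M\<close> by (auto simp: prefix_event_def)
    then have "(SOME v. v \<in> prefix_event t ?A) \<in> prefix_event t ?A"
      by (rule someI)
    then have "(SOME v. v \<in> prefix_event t ?A) \<in> space M"
      and "\<forall>j<t. x j (SOME v. v \<in> prefix_event t ?A) = x j w"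
      by (auto simp: prefix_event_def)
    with X \<open>w \<in> space M\<close> show ?thesis
      unfolding determined_by_prefix_def by blast
  qed
  finally show ?thesis ..
qed

lemma borel_measurable_prefix:
  fixes X :: "'a \<Rightarrow> real"
  assumes "determined_by_prefix t X"
  shows "X \<in> borel_measurable M"
proof -
  have "(\<lambda>w. \<Sum>A\<in>Pow {..<t}. X (SOME v. v \<in> prefix_event t A) * indicator (prefix_event t A) w)
      \<in> borel_measurable M"
    by measurable
  then show ?thesis
    by (rule measurable_cong[THEN iffD1, rotated]) (simp add: prefix_expansion[OF assms])
qed

lemma integrable_prefix:
  fixes X :: "'a \<Rightarrow> real"
  assumes "determined_by_prefix t X"
  shows "integrable M X"
proof -
  have "integrable M
      (\<lambda>w. \<Sum>A\<in>Pow {..<t}. X (SOME v. v \<in> prefix_event t A) * indicator (prefix_event t A) w)"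
    by (intro Bochner_Integration.integrable_sum Bochner_Integration.integrable_mult_right)
       (simp add: emeasure_eq_measure)
  then show ?thesis
    by (rule Bochner_Integration.integrable_cong[OF refl, THEN iffD1, rotated])
       (simp add: prefix_expansion[OF assms])
qed

lemma expectation_prefix:
  fixes X :: "'a \<Rightarrow> real"
  assumes X: "determined_by_prefix t X"
  shows "expectation X = (\<Sum>A\<in>Pow {..<t}. X (SOME v. v \<in> prefix_event t A) * prob (prefix_event t A))"
proof -
  have "expectation X
      = expectation
          (\<lambda>w. \<Sum>A\<in>Pow {..<t}. X (SOME v. v \<in> prefix_event t A) * indicator (prefix_event t A) w)"
    by (rule Bochner_Integration.integral_cong[OF refl prefix_expansion[OF X]])
  also have "\<dots> = (\<Sum>A\<in>Pow {..<t}. X (SOME v. v \<in> prefix_event t A) * prob (prefix_event t A))"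
    by (subst Bochner_Integration.integral_sum) (auto simp: emeasure_eq_measure)
  finally show ?thesis .
qed

lemma expectation_success_mult_prefix:
  fixes X :: "'a \<Rightarrow> real"
  assumes X: "determined_by_prefix t X"
  shows "expectation (\<lambda>w. of_bool (x t w) * X w) = xi * expectation X"
proof -
  let ?c = "\<lambda>A. X (SOME v. v \<in> prefix_event t A)"
  have "expectation (\<lambda>w. of_bool (x t w) * X w)
      = expectation (\<lambda>w. \<Sum>A\<in>Pow {..<t}. ?c A * indicator (prefix_event t A \<inter> {w\<in>space M. x t w}) w)"
  proof (rule Bochner_Integration.integral_cong[OF refl])
    fix w assume "w \<in> space M"
    then show "of_bool (x t w) * X w
        = (\<Sum>A\<in>Pow {..<t}. ?c A * indicator (prefix_event t A \<inter> {w\<in>space M. x t w}) w)"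
      by (subst prefix_expansion[OF X]) (auto simp: sum_distrib_left indicator_def intro!: sum.cong)
  qed
  also have "\<dots> = (\<Sum>A\<in>Pow {..<t}. ?c A * prob (prefix_event t A \<inter> {w\<in>space M. x t w}))"
    by (subst Bochner_Integration.integral_sum) (auto simp: emeasure_eq_measure)
  also have "\<dots> = xi * (\<Sum>A\<in>Pow {..<t}. ?c A * prob (prefix_event t A))"
    by (auto simp: sum_distrib_left prob_prefix_event_success intro!: sum.cong)
  also have "\<dots> = xi * expectation X"
    by (simp add: expectation_prefix[OF X])
  finally show ?thesis .
qed

lemma expectation_centered_success_mult_prefix:
  fixes X :: "'a \<Rightarrow> real"
  assumes X: "determined_by_prefix t X"
  shows "expectation (\<lambda>w. (of_bool (x t w) - xi) * X w) = 0"
proof -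
  have "integrable M (\<lambda>w. of_bool (x t w) * X w)"
    using determined_by_prefix_mono[OF X]
    by (intro integrable_prefix[of "Suc t"] determined_by_prefix_intros) auto
  then show ?thesis
    using integrable_prefix[OF X] by (simp add: left_diff_distrib expectation_success_mult_prefix[OF X])
qed

lemma expectation_if_success:
  fixes X :: "'a \<Rightarrow> real"
  assumes X: "determined_by_prefix t X"
  shows "expectation (\<lambda>w. if x t w then a else X w) = xi * a + (1 - xi) * expectation X"
proof -
  have "determined_by_prefix t (\<lambda>w. a - X w)"
    using X by (intro determined_by_prefix_intros)
  moreover have "integrable M (\<lambda>w. of_bool (x t w) * (a - X w))"
    using determined_by_prefix_mono[OF X]
    by (intro integrable_prefix[of "Suc t"] determined_by_prefix_intros) auto
  ultimately have "expectation (\<lambda>w. X w + of_bool (x t w) * (a - X w))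
      = expectation X + xi * (a - expectation X)"
    using integrable_prefix[OF X] by (simp add: expectation_success_mult_prefix prob_space)
  moreover have "(\<lambda>w. if x t w then a else X w) = (\<lambda>w. X w + of_bool (x t w) * (a - X w))"
    by auto
  ultimately show ?thesis
    by (simp add: algebra_simps)
qed

subsection \<open>Average age of information\<close>

definition Delta :: "nat \<Rightarrow> 'a \<Rightarrow> real" where
  "Delta s w = real_of_int (disc_aoi (\<lambda>j. x j w) s)"

text \<open>The martingale differences of the AoI recursion, see \<open>Delta_Suc_innovation\<close>.\<close>

definition innovation :: "nat \<Rightarrow> 'a \<Rightarrow> real" where
  "innovation s w = (of_bool (x s w) - xi) * (1 - Delta s w)"

lemma Delta_0: "Delta 0 w = 2"
  by (simp add: Delta_def)

lemma Delta_Suc: "Delta (Suc s) w = (if x s w then 2 else Delta s w + 1)"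
  by (simp add: Delta_def disc_aoi_Suc)

lemma two_le_Delta: "2 \<le> Delta s w"
  using two_le_disc_aoi[of "\<lambda>j. x j w" s] by (simp add: Delta_def)

lemma Delta_Suc_innovation: "Delta (Suc s) w = (1 - xi) * Delta s w + 1 + xi + innovation s w"
  by (simp add: Delta_Suc innovation_def algebra_simps)

lemma determined_by_prefix_Delta: "s \<le> t \<Longrightarrow> determined_by_prefix t (Delta s)"
  unfolding Delta_def by (intro determined_by_prefixI arg_cong[where f=real_of_int] disc_aoi_cong) auto

lemma determined_by_prefix_innovation: "s < t \<Longrightarrow> determined_by_prefix t (innovation s)"
  unfolding innovation_def by (intro determined_by_prefix_intros determined_by_prefix_Delta) auto

text \<open>\<open>1 + 1 / xi\<close> is the fixed point of the recursion \<open>m \<mapsto> 2 xi + (1 - xi) (m + 1)\<close> for the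
  mean; the second-moment bound is invariant under the corresponding recursion.\<close>

lemma expectation_Delta_le:
  "expectation (Delta s) \<le> 1 + 1 / xi \<and> expectation (\<lambda>w. (Delta s w)\<^sup>2) \<le> (7 + 2 / xi) / xi"
proof (induction s)
  case 0
  have "4 * xi \<le> 7 + 2 / xi"
    using xi_le_1 divide_nonneg_pos[of 2 xi] xi_pos by linarith
  then have "4 \<le> (7 + 2 / xi) / xi"
    using xi_pos by (simp add: le_divide_eq)
  moreover have "1 \<le> 1 / xi"
    using xi_pos xi_le_1 by simp
  ultimately show ?case
    by (simp add: Delta_def prob_space)
next
  case (Suc s)
  have prefix: "determined_by_prefix s (\<lambda>w. Delta s w + 1)" "determined_by_prefix s (\<lambda>w. (Delta s w + 1)\<^sup>2)"
    by (intro determined_by_prefix_intros determined_by_prefix_Delta order_refl)+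
  have int: "integrable M (Delta s)" "integrable M (\<lambda>w. (Delta s w)\<^sup>2)"
    by (intro integrable_prefix[of s] determined_by_prefix_intros determined_by_prefix_Delta order_refl)+
  have "Delta (Suc s) = (\<lambda>w. if x s w then 2 else Delta s w + 1)"
    by (simp add: fun_eq_iff Delta_Suc)
  then have "expectation (Delta (Suc s)) = xi * 2 + (1 - xi) * (expectation (Delta s) + 1)"
    using expectation_if_success[OF prefix(1), of 2] int by (simp add: prob_space)
  also have "\<dots> \<le> xi * 2 + (1 - xi) * (1 + 1 / xi + 1)"
    using Suc.IH xi_le_1 by (intro add_left_mono mult_left_mono) auto
  also have "\<dots> = 1 + 1 / xi"
    using xi_pos by (simp add: field_simps)
  finally have "expectation (Delta (Suc s)) \<le> 1 + 1 / xi" .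
  have "expectation (\<lambda>w. (Delta (Suc s) w)\<^sup>2)
      = xi * 4 + (1 - xi) * (expectation (\<lambda>w. (Delta s w)\<^sup>2) + 2 * expectation (Delta s) + 1)"
  proof -
    have "(\<lambda>w. (Delta (Suc s) w)\<^sup>2) = (\<lambda>w. if x s w then 4 else (Delta s w + 1)\<^sup>2)"
      by (simp add: fun_eq_iff Delta_Suc)
    then show ?thesis
      using expectation_if_success[OF prefix(2), of 4] int by (simp add: power2_sum prob_space)
  qed
  also have "\<dots> \<le> xi * 4 + (1 - xi) * ((7 + 2 / xi) / xi + 2 * (1 + 1 / xi) + 1)"
    using Suc.IH xi_le_1 by (intro add_left_mono mult_left_mono) auto
  also have "\<dots> \<le> (7 + 2 / xi) / xi"
    using xi_pos xi_le_1 by (simp add: field_simps)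
  finally show ?case
    using \<open>expectation (Delta (Suc s)) \<le> 1 + 1 / xi\<close> by simp
qed

lemma expectation_innovation_mult:
  assumes "s < t"
  shows "expectation (\<lambda>w. innovation s w * innovation t w) = 0"
proof -
  have "determined_by_prefix t (\<lambda>w. innovation s w * (1 - Delta t w))"
    using assms
    by (intro determined_by_prefix_intros determined_by_prefix_innovation determined_by_prefix_Delta) auto
  then have "expectation (\<lambda>w. (of_bool (x t w) - xi) * (innovation s w * (1 - Delta t w))) = 0"
    by (rule expectation_centered_success_mult_prefix)
  then show ?thesis
    by (simp add: innovation_def[of t] ac_simps)
qed

lemma integrable_innovation_mult: "integrable M (\<lambda>w. innovation s w * innovation t w)"
  by (intro integrable_prefix[of "Suc (max s t)"] determined_by_prefix_intros
      determined_by_prefix_innovation) auto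

lemma innovation_square_le: "(innovation s w)\<^sup>2 \<le> (Delta s w)\<^sup>2"
proof -
  have "\<bar>of_bool (x s w) - xi\<bar> \<le> 1"
    using xi_pos xi_le_1 by auto
  moreover have "\<bar>1 - Delta s w\<bar> \<le> \<bar>Delta s w\<bar>"
    using two_le_Delta[of s w] by simp
  ultimately have "\<bar>innovation s w\<bar> \<le> 1 * \<bar>Delta s w\<bar>"
    unfolding innovation_def abs_mult by (intro mult_mono) auto
  then show ?thesis
    by (simp add: abs_le_square_iff)
qed

lemma expectation_sum_innovation_square:
  "expectation (\<lambda>w. (\<Sum>s<N. innovation s w)\<^sup>2) \<le> (7 + 2 / xi) / xi * real N"
proof -
  have "expectation (\<lambda>w. (\<Sum>s<N. innovation s w)\<^sup>2)
      = (\<Sum>s<N. \<Sum>t<N. expectation (\<lambda>w. innovation s w * innovation t w))"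
    by (simp add: power2_eq_square sum_product integrable_innovation_mult)
  also have "\<dots> = (\<Sum>s<N. expectation (\<lambda>w. (innovation s w)\<^sup>2))"
  proof (intro sum.cong refl)
    fix s assume "s \<in> {..<N}"
    have "expectation (\<lambda>w. innovation s w * innovation t w) = 0" if "t \<noteq> s" for t
      using that expectation_innovation_mult[of s t] expectation_innovation_mult[of t s]
      by (cases "s < t") (simp_all add: mult.commute)
    with \<open>s \<in> {..<N}\<close> show "(\<Sum>t<N. expectation (\<lambda>w. innovation s w * innovation t w))
        = expectation (\<lambda>w. (innovation s w)\<^sup>2)"
      by (subst sum.remove[of _ s]) (auto simp: power2_eq_square)
  qed
  also have "\<dots> \<le> (\<Sum>s<N. (7 + 2 / xi) / xi)"
  proof (intro sum_mono)
    fix s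
    have "integrable M (\<lambda>w. (Delta s w)\<^sup>2)"
      by (intro integrable_prefix[of s] determined_by_prefix_intros determined_by_prefix_Delta order_refl)
    then have "expectation (\<lambda>w. (innovation s w)\<^sup>2) \<le> expectation (\<lambda>w. (Delta s w)\<^sup>2)"
      using integrable_innovation_mult[of s s] innovation_square_le
      by (intro integral_mono) (auto simp: power2_eq_square)
    then show "expectation (\<lambda>w. (innovation s w)\<^sup>2) \<le> (7 + 2 / xi) / xi"
      using expectation_Delta_le[of s] by linarith
  qed
  finally show ?thesis
    by (simp add: mult.commute)
qed

lemma sum_Delta_eq:
  "xi * (\<Sum>s<N. Delta s w) = real N * (1 + xi) + (\<Sum>s<N. innovation s w) - Delta N w + 2"
  by (induction N) (simp_all add: Delta_Suc_innovation Delta_0 algebra_simps)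

lemma expectation_deviation_sum_Delta:
  "expectation (\<lambda>w. ((\<Sum>s<N. Delta s w) - real N * (1 + 1 / xi))\<^sup>2)
     \<le> 3 * ((7 + 2 / xi) / xi + 4) / xi\<^sup>2 * (real N + 1)"
proof -
  let ?B = "(7 + 2 / xi) / xi" and ?W = "\<lambda>w. \<Sum>s<N. innovation s w"
  have prefix: "determined_by_prefix N ?W" "determined_by_prefix N (Delta N)"
    "determined_by_prefix N (\<lambda>w. \<Sum>s<N. Delta s w)"
    by (auto intro!: determined_by_prefix_intros determined_by_prefix_innovation
        determined_by_prefix_Delta)
  have "((\<Sum>s<N. Delta s w) - real N * (1 + 1 / xi))\<^sup>2 \<le> 3 * ((?W w)\<^sup>2 + (Delta N w)\<^sup>2 + 4) / xi\<^sup>2" for w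
  proof -
    have "(\<Sum>s<N. Delta s w) - real N * (1 + 1 / xi) = (?W w + (- Delta N w) + 2) / xi"
      using sum_Delta_eq[where N=N and w=w] xi_pos by (simp add: field_simps)
    then have "((\<Sum>s<N. Delta s w) - real N * (1 + 1 / xi))\<^sup>2 = ((?W w + (- Delta N w) + 2) / xi)\<^sup>2"
      by simp
    also have "\<dots> \<le> 3 * ((?W w)\<^sup>2 + (Delta N w)\<^sup>2 + 4) / xi\<^sup>2"
      using square_sum3_le[of "?W w" "- Delta N w" 2] by (simp add: power_divide divide_right_mono)
    finally show ?thesis .
  qed
  then have "expectation (\<lambda>w. ((\<Sum>s<N. Delta s w) - real N * (1 + 1 / xi))\<^sup>2)
      \<le> expectation (\<lambda>w. 3 * ((?W w)\<^sup>2 + (Delta N w)\<^sup>2 + 4) / xi\<^sup>2)"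
    using prefix
    by (intro integral_mono integrable_prefix[of N] determined_by_prefix_intros
        determined_by_prefix_Delta determined_by_prefix_innovation) auto
  also have "\<dots> = 3 * (expectation (\<lambda>w. (?W w)\<^sup>2) + expectation (\<lambda>w. (Delta N w)\<^sup>2) + 4) / xi\<^sup>2"
  proof -
    have "integrable M (\<lambda>w. (?W w)\<^sup>2)" "integrable M (\<lambda>w. (Delta N w)\<^sup>2)"
      using prefix by (auto intro: integrable_prefix determined_by_prefix_power)
    then show ?thesis
      by (simp add: prob_space)
  qed
  also have "\<dots> \<le> 3 * (?B * real N + ?B + 4) / xi\<^sup>2"
    using expectation_sum_innovation_square[of N] expectation_Delta_le[of N]
    by (intro divide_right_mono mult_left_mono add_mono) auto
  also have "\<dots> \<le> 3 * (?B + 4) / xi\<^sup>2 * (real N + 1)"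
    using xi_pos by (simp add: field_simps)
  finally show ?thesis .
qed

lemma AE_average_Delta: "AE w in M. (\<lambda>N. (\<Sum>s<N. Delta s w) / real N) \<longlonglongrightarrow> 1 + 1 / xi"
proof (rule AE_tendsto_average_of_variance_bound[OF _ _ _ expectation_deviation_sum_Delta])
  show "Delta s \<in> borel_measurable M" for s
    by (intro borel_measurable_prefix[of s] determined_by_prefix_Delta order_refl)
  show "0 \<le> Delta s w" for s w
    using two_le_Delta[of s w] by simp
  show "integrable M (\<lambda>w. ((\<Sum>s<N. Delta s w) - real N * (1 + 1 / xi))\<^sup>2)" for N
    by (auto intro!: integrable_prefix[of N] determined_by_prefix_intros determined_by_prefix_Delta)
  show "(\<lambda>N. real N * (1 + 1 / xi) / real N) \<longlonglongrightarrow> 1 + 1 / xi"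
    by (rule Lim_transform_eventually[OF tendsto_const])
       (auto simp: eventually_sequentially intro!: exI[of _ 1])
qed

lemma AE_time_average_aoi:
  "AE w in M. ((\<lambda>t. integral {0..t} (aoi (\<lambda>j. x j w)) / t) \<longlongrightarrow> 1 / 2 + 1 / xi) at_top"
  using AE_average_Delta
proof eventually_elim
  case (elim w)
  then have "((\<lambda>t. integral {0..t} (aoi (\<lambda>j. x j w)) / t) \<longlongrightarrow> 1 + 1 / xi - 1 / 2) at_top"
    by (intro aoi_time_average) (simp add: Delta_def)
  then show ?case
    by simp
qed

end

lemma bernoulli_seq_iid:
  fixes Y :: "nat \<Rightarrow> 'a \<Rightarrow> 'b" and P :: "'b pmf"
  assumes "prob_space M"
    and indep: "prob_space.indep_vars M (\<lambda>_. count_space UNIV) Y UNIV"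
    and distr: "\<And>s. distr M (count_space UNIV) (Y s) = measure_pmf P"
    and pos: "0 < measure_pmf.prob P {z. Q z}"
  shows "bernoulli_seq M (\<lambda>s w. Q (Y s w)) (measure_pmf.prob P {z. Q z})"
proof -
  interpret prob_space M by fact
  let ?xi = "measure_pmf.prob P {z. Q z}"
  have Y [measurable]: "Y s \<in> measurable M (count_space UNIV)" for s
    using indep by (auto simp: indep_vars_def2)
  have prob_Q: "prob {w\<in>space M. Q (Y s w) = c} = (if c then ?xi else 1 - ?xi)" for s c
  proof -
    have "prob {w\<in>space M. Q (Y s w) = c} = measure_pmf.prob P {z. Q z = c}"
      using measure_distr[OF Y, of "{z. Q z = c}"] by (simp add: distr vimage_def Int_def conj_commute)
    also have "\<dots> = (if c then ?xi else 1 - ?xi)"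
      using measure_pmf.prob_compl[of "{z. Q z}" P]
      by (cases c) (simp_all add: Compl_eq_Diff_UNIV[symmetric] Collect_neg_eq)
    finally show ?thesis .
  qed
  show ?thesis
  proof
    show "{w\<in>space M. Q (Y j w)} \<in> events" for j
      using measurable_compose[OF Y, of Q "count_space UNIV"] by (simp add: Measurable.pred_def)
    fix J :: "nat set" and c assume "finite J"
    show "prob {w\<in>space M. \<forall>j\<in>J. Q (Y j w) = c j} = (\<Prod>j\<in>J. if c j then ?xi else 1 - ?xi)"
    proof (cases "J = {}")
      case False
      have "{w\<in>space M. \<forall>j\<in>J. Q (Y j w) = c j} = (\<Inter>j\<in>J. {w\<in>space M. Q (Y j w) = c j})"
        using False by auto
      also have "prob \<dots> = (\<Prod>j\<in>J. prob {w\<in>space M. Q (Y j w) = c j})"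
      proof (rule indep_setsD[of "\<lambda>s. {Y s -` A \<inter> space M | A. A \<in> sets (count_space UNIV)}" UNIV])
        show "indep_sets (\<lambda>s. {Y s -` A \<inter> space M | A. A \<in> sets (count_space UNIV)}) UNIV"
          using indep by (simp add: indep_vars_def2)
        show "\<forall>j\<in>J. {w\<in>space M. Q (Y j w) = c j} \<in> {Y j -` A \<inter> space M | A. A \<in> sets (count_space UNIV)}"
          by (auto intro!: exI[of _ "{z. Q z = c _}"])
      qed (use False \<open>finite J\<close> in auto)
      finally show ?thesis
        by (simp add: prob_Q)
    qed (simp add: prob_space)
  qed (use pos measure_pmf.prob_le_1 in auto)
qed

theorem theorem3:
  fixes M :: "'a measure" and Y :: "nat \<Rightarrow> nat \<Rightarrow> 'a \<Rightarrow> bool \<times> nat \<times> bool"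
    and U E :: nat and alpha :: real and p omega :: "nat \<Rightarrow> real"
  assumes "prob_space M"
    and "U \<ge> 1" and "E \<ge> 1"
    and "0 \<le> alpha" and "alpha \<le> 1"
    and "\<forall>b\<in>{1..E}. 0 \<le> p b" and "(\<Sum>b=1..E. p b) \<le> 1"
    and "\<forall>b\<in>{1..E}. 0 \<le> omega b \<and> omega b \<le> 1"
    and "\<forall>i<U. prob_space.indep_vars M (\<lambda>_. count_space UNIV) (Y i) UNIV"
    and "\<forall>i<U. \<forall>s. distr M (count_space UNIV) (Y i s) = measure_pmf (slot_pmf E alpha p omega)"
    and "succ_prob E alpha p omega > 0"
  shows "let xi = succ_prob E alpha p omega; T = real U * xi in
    xi \<le> 1 \<and>
    (\<forall>i<U. let X = (\<lambda>w s. delivered (Y i s w)) in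
      (\<forall>\<delta>::nat. \<delta> \<ge> 2 \<longrightarrow>
         (AE w in M. (\<lambda>N. card {s\<in>{..<N}. disc_aoi (X w) s = int \<delta>} / real N)
                        \<longlonglongrightarrow> xi * (1 - xi) ^ (\<delta> - 2))) \<and>
      (\<forall>\<delta>::nat. \<delta> \<ge> 2 \<longrightarrow>
         (AE w in M. (\<lambda>n. card {k\<in>{1..n}. peak_aoi (X w) k = int \<delta>} / real n)
                        \<longlonglongrightarrow> xi * (1 - xi) ^ (\<delta> - 2))) \<and>
      (AE w in M. ((\<lambda>t. integral {0..t} (aoi (X w)) / t) \<longlongrightarrow> 1/2 + 1/xi) at_top) \<and>
      1/2 + 1/xi = 1/2 + real U / T \<and>
      (\<forall>\<theta>::nat. \<theta> \<ge> 1 \<longrightarrow>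
         (AE w in M. ((\<lambda>t. measure lborel {r\<in>{0..t}. aoi (X w) r > real \<theta>} / t)
                        \<longlongrightarrow> (1 - xi) ^ (\<theta> - 1)) at_top) \<and>
         (1 - xi) ^ (\<theta> - 1) = (1 - T / real U) ^ (\<theta> - 1)))"
proof -
  let ?xi = "succ_prob E alpha p omega"
  have prob_delivered: "measure_pmf.prob (slot_pmf E alpha p omega) {z. delivered z} = ?xi"
    using assms(4-8) by (rule measure_delivered_slot_pmf)
  then have "?xi \<le> 1"
    by (metis measure_pmf.prob_le_1)
  have device: "bernoulli_seq M (\<lambda>s w. delivered (Y i s w)) ?xi" if "i < U" for i
    using bernoulli_seq_iid[of M "Y i" "slot_pmf E alpha p omega" delivered] assms(1,9-11) that
    by (simp add: prob_delivered)
  have "real U \<noteq> 0"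
    using assms(2) by simp
  then show ?thesis
    unfolding Let_def using \<open>?xi \<le> 1\<close>
    by (intro conjI allI impI device bernoulli_seq.AE_frequency_disc_aoi_eq
        bernoulli_seq.AE_frequency_peak_aoi_eq bernoulli_seq.AE_time_average_aoi
        bernoulli_seq.AE_age_violation) simp_all
qed


end
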